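(* Let $G\le\mathrm{Aut}(\mathcal{T}_d)$ be a $d$-persistent self-similar group. Whenever two triples $(T_-,\sigma(g_1,\dots,g_n),T_+)$ and $(T_-',\sigma'(g_1',\dots,g_{n'}'),T_+')$ (with all $g_i,g_j'\in G$) represent the same element of $V_d(G)$, we have $g_n=g'_{n'}$.
   Context: Let $X=\{1,\dots,d\}$ ($d\ge2$) with its usual order; $X^*$ is the vertex set of the rooted $d$-ary tree $\mathcal{T}_d$ (root the empty word, $u$ adjacent to $ux$), ordered lexicographically. Every $f\in\mathrm{Aut}(\mathcal{T}_d)$ has a wreath recursion $f=\rho(f)(f_1,\dots,f_d)$ with $\rho(f)\in S_d$ and $f_i$ determined by $f(iw)=\rho(f)(i)f_i(w)$; the states of $f$ form the smallest set containing $f$ and closed under $f\mapsto f_i$. $G$ is self-similar if it contains all states of its elements, and $d$-persistent if $g_d=g$ for every $g\in G$ with wreath recursion $g=\rho(g)(g_1,\dots,g_d)$. With $X^\omega$ the infinite words, a triple $(T_-,\sigma(g_1,\dots,g_n),T_+)$ consists of finite complete rooted subtrees $T_-,T_+$ (rooted: contain the root; complete: $ux\in T$ implies $uy\in T$ for all $y$) with $n$ leaves $u_1,\dots,u_n$ resp. $v_1,\dots,v_n$ in lexicographic order, $\sigma\in S_n$, $g_i\in G$; it represents the homeomorphism of $X^\omega$ with $v_iw\mapsto u_{\sigma(i)}g_i(w)$. $V_d(G)$ is the group of all homeomorphisms so represented. *)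

theory Defs
  imports Main "HOL-Library.List_Lexorder"
begin

text \<open>Alphabet X = {1..d}; finite words are nat lists over X (vertices of T_d),
 infinite words are functions nat => nat with values in X.  The order on lists
 from List_Lexorder is the lexicographic order.\<close>

definition words :: "nat \<Rightarrow> nat list set" where
  "words d = {w. set w \<subseteq> {1..d}}"

definition infwords :: "nat \<Rightarrow> (nat \<Rightarrow> nat) set" where
  "infwords d = {w. \<forall>k. w k \<in> {1..d}}"

definition stake :: "nat \<Rightarrow> (nat \<Rightarrow> nat) \<Rightarrow> nat list" where
  "stake n w = map w [0..<n]"

definition tree_aut :: "nat \<Rightarrow> (nat list \<Rightarrow> nat list) \<Rightarrow> bool" where
  "tree_aut d f \<longleftrightarrow> bij_betw f (words d) (words d) \<and> f [] = [] \<and>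
     (\<forall>u\<in>words d. \<forall>x\<in>{1..d}. \<exists>y\<in>{1..d}. f (u @ [x]) = f u @ [y]) \<and>
     (\<forall>w. w \<notin> words d \<longrightarrow> f w = w)"

text \<open>The state f_i of f: f(i w) = rho(f)(i) f_i(w).\<close>
definition state_of :: "nat \<Rightarrow> (nat list \<Rightarrow> nat list) \<Rightarrow> nat \<Rightarrow> (nat list \<Rightarrow> nat list)" where
  "state_of d f i = (\<lambda>w. if w \<in> words d then tl (f (i # w)) else w)"

definition aut_subgroup :: "nat \<Rightarrow> (nat list \<Rightarrow> nat list) set \<Rightarrow> bool" where
  "aut_subgroup d G \<longleftrightarrow> (\<forall>g\<in>G. tree_aut d g) \<and> id \<in> G \<and>
     (\<forall>g\<in>G. \<forall>h\<in>G. g \<circ> h \<in> G) \<and> (\<forall>g\<in>G. inv g \<in> G)"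

definition self_similar :: "nat \<Rightarrow> (nat list \<Rightarrow> nat list) set \<Rightarrow> bool" where
  "self_similar d G \<longleftrightarrow> (\<forall>g\<in>G. \<forall>i\<in>{1..d}. state_of d g i \<in> G)"

definition persistent :: "nat \<Rightarrow> (nat list \<Rightarrow> nat list) set \<Rightarrow> bool" where
  "persistent d G \<longleftrightarrow> (\<forall>g\<in>G. state_of d g d = g)"

definition aut_inf :: "(nat list \<Rightarrow> nat list) \<Rightarrow> (nat \<Rightarrow> nat) \<Rightarrow> (nat \<Rightarrow> nat)" where
  "aut_inf f w = (\<lambda>k. f (stake (Suc k) w) ! k)"

definition fcr_subtree :: "nat \<Rightarrow> nat list set \<Rightarrow> bool" where
  "fcr_subtree d T \<longleftrightarrow> T \<subseteq> words d \<and> finite T \<and> [] \<in> T \<and>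
     (\<forall>u x. u @ [x] \<in> T \<longrightarrow> u \<in> T) \<and>
     (\<forall>u x. u @ [x] \<in> T \<longrightarrow> (\<forall>y\<in>{1..d}. u @ [y] \<in> T))"

definition leaves :: "nat list set \<Rightarrow> nat list set" where
  "leaves T = {u\<in>T. \<forall>x. u @ [x] \<notin> T}"

definition leaf_list :: "nat list set \<Rightarrow> nat list list" where
  "leaf_list T = sorted_list_of_set (leaves T)"

text \<open>A triple (T_-, sigma(g_1..g_n), T_+) with 0-based indices: sigma is a
 permutation of {0..<n}, gs = [g_1,...,g_n].\<close>
definition valid_triple :: "nat \<Rightarrow> (nat list \<Rightarrow> nat list) set \<Rightarrow> nat list set \<Rightarrow> (nat \<Rightarrow> nat)
     \<Rightarrow> (nat list \<Rightarrow> nat list) list \<Rightarrow> nat list set \<Rightarrow> bool" where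
  "valid_triple d G Tm \<sigma> gs Tp \<longleftrightarrow> fcr_subtree d Tm \<and> fcr_subtree d Tp \<and>
     card (leaves Tm) = length gs \<and> card (leaves Tp) = length gs \<and>
     bij_betw \<sigma> {..<length gs} {..<length gs} \<and> set gs \<subseteq> G"

text \<open>The homeomorphism represented: v_i w |-> u_{sigma i} g_i(w).\<close>
definition triple_map :: "nat list set \<Rightarrow> (nat \<Rightarrow> nat) \<Rightarrow> (nat list \<Rightarrow> nat list) list
     \<Rightarrow> nat list set \<Rightarrow> (nat \<Rightarrow> nat) \<Rightarrow> (nat \<Rightarrow> nat)" where
  "triple_map Tm \<sigma> gs Tp w =
    (let us = leaf_list Tm; vs = leaf_list Tp in
     if \<exists>i<length vs. stake (length (vs ! i)) w = vs ! i then
       (let i = (SOME i. i < length vs \<and> stake (length (vs ! i)) w = vs ! i);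
            v = vs ! i; u = us ! \<sigma> i;
            z = aut_inf (gs ! i) (\<lambda>k. w (k + length v))
        in (\<lambda>k. if k < length u then u ! k else z (k - length u)))
     else w)"

end

theory Submission imports Defs begin

text \<open>In lexicographic order the last leaf of a complete subtree is the rightmost one,
  d^k. An input d^K w with K \<ge> k therefore passes through the last leaf, and by
  persistence the triple sends it to Q g_n(w) for a finite word Q independent of w.
  Two representations of the same map thus satisfy Q g_n(w) = Q' g'_n'(w) for all w.
  If Q were shorter than Q', the first letter of g_n(w) would not depend on w,
  contradicting injectivity since d \<ge> 2; so |Q| = |Q'|, hence g_n and g'_n' agree on
  all infinite words, and a tree automorphism is determined by that action.\<close>

definition prepend :: "nat list \<Rightarrow> (nat \<Rightarrow> nat) \<Rightarrow> (nat \<Rightarrow> nat)" where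
  "prepend u w = (\<lambda>j. if j < length u then u ! j else w (j - length u))"

lemma prepend_prepend: "prepend a (prepend b w) = prepend (a @ b) w"
  by (auto simp: prepend_def nth_append fun_eq_iff)

lemma prepend_in_infwords: "u \<in> words d \<Longrightarrow> w \<in> infwords d \<Longrightarrow> prepend u w \<in> infwords d"
  by (auto simp: prepend_def words_def infwords_def dest!: nth_mem)

lemma stake_prepend: "stake (length u + m) (prepend u w) = u @ stake m w"
  by (rule nth_equalityI) (auto simp: stake_def prepend_def nth_append)

lemma stake_length_prepend: "stake (length u) (prepend u w) = u"
  using stake_prepend[of u 0 w] by (simp add: stake_def)

lemma stake_in_words: "w \<in> infwords d \<Longrightarrow> stake n w \<in> words d"
  by (auto simp: stake_def words_def infwords_def)

lemma take_stake: "take a (stake b w) = stake (min a b) w"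
  by (simp add: stake_def take_map min_def)

lemma append_in_words_iff: "a @ b \<in> words d \<longleftrightarrow> a \<in> words d \<and> b \<in> words d"
  by (auto simp: words_def)

lemma replicate_in_words: "1 \<le> d \<Longrightarrow> replicate m d \<in> words d"
  by (auto simp: words_def)

subsection \<open>Tree automorphisms\<close>

lemma length_tree_aut: "tree_aut d g \<Longrightarrow> x \<in> words d \<Longrightarrow> length (g x) = length x"
proof (induction x rule: rev_induct)
  case Nil then show ?case by (simp add: tree_aut_def)
next
  case (snoc a x)
  then have "x \<in> words d" "a \<in> {1..d}" by (auto simp: words_def)
  with snoc.prems obtain y where "g (x @ [a]) = g x @ [y]" unfolding tree_aut_def by blast
  with snoc \<open>x \<in> words d\<close> show ?case by simp
qed

lemma tree_aut_append: "tree_aut d g \<Longrightarrow> a @ b \<in> words d \<Longrightarrow> \<exists>c. g (a @ b) = g a @ c"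
proof (induction b rule: rev_induct)
  case Nil then show ?case by simp
next
  case (snoc x b)
  then have "a @ b \<in> words d" "x \<in> {1..d}" by (auto simp: words_def)
  with snoc.prems obtain y where "g ((a @ b) @ [x]) = g (a @ b) @ [y]" unfolding tree_aut_def by blast
  with snoc \<open>a @ b \<in> words d\<close> show ?case by auto
qed

lemma tree_aut_singleton: "tree_aut d g \<Longrightarrow> x \<in> {1..d} \<Longrightarrow> \<exists>y\<in>{1..d}. g [x] = [y]"
  unfolding tree_aut_def by (metis append.left_neutral words_def empty_subsetI mem_Collect_eq list.set(1))

lemma nth_tree_aut_take:
  assumes g: "tree_aut d g" and x: "x \<in> words d" and "j < m" "m \<le> length x"
  shows "g x ! j = g (take m x) ! j"
proof -
  have "take m x \<in> words d" using x by (metis append_take_drop_id append_in_words_iff)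
  then have "length (g (take m x)) = m" using length_tree_aut[OF g] assms(4) by simp
  moreover obtain c where "g x = g (take m x) @ c"
    using tree_aut_append[OF g] x by (metis append_take_drop_id)
  ultimately show ?thesis using \<open>j < m\<close> by (simp add: nth_append)
qed

lemma aut_inf_eq_nth_stake:
  assumes g: "tree_aut d g" and w: "w \<in> infwords d" and j: "j < N"
  shows "aut_inf g w j = g (stake N w) ! j"
proof -
  have "g (stake N w) ! j = g (take (Suc j) (stake N w)) ! j"
    by (rule nth_tree_aut_take[OF g stake_in_words[OF w]]) (use j in \<open>auto simp: stake_def\<close>)
  also have "take (Suc j) (stake N w) = stake (Suc j) w" using j by (simp add: take_stake)
  finally show ?thesis by (simp add: aut_inf_def)
qed

lemma tree_aut_eqI_aut_inf:
  assumes g: "tree_aut d g" and g': "tree_aut d g'" and "1 \<le> d"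
    and eq: "\<forall>w\<in>infwords d. aut_inf g w = aut_inf g' w"
  shows "g = g'"
proof
  fix x
  show "g x = g' x"
  proof (cases "x \<in> words d")
    case False then show ?thesis using g g' by (simp add: tree_aut_def)
  next
    case True
    define w where "w = prepend x (\<lambda>_. 1)"
    have w: "w \<in> infwords d"
      unfolding w_def by (rule prepend_in_infwords[OF True]) (use \<open>1 \<le> d\<close> in \<open>auto simp: infwords_def\<close>)
    have x: "stake (length x) w = x" by (simp add: w_def stake_length_prepend)
    show ?thesis
    proof (rule nth_equalityI)
      show "length (g x) = length (g' x)"
        using length_tree_aut[OF g True] length_tree_aut[OF g' True] by simp
      fix j assume "j < length (g x)"
      then have j: "j < length x" using length_tree_aut[OF g True] by simp
      show "g x ! j = g' x ! j"
        using aut_inf_eq_nth_stake[OF g w j] aut_inf_eq_nth_stake[OF g' w j] eq w x by simp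
    qed
  qed
qed

lemma length_le_if_prepend_aut_inf_eq:
  assumes d: "2 \<le> d" and g: "tree_aut d g"
    and eq: "\<forall>w\<in>infwords d. prepend Q (aut_inf g w) = prepend Q' (aut_inf g' w)"
  shows "length Q' \<le> length Q"
proof (rule ccontr)
  assume "\<not> length Q' \<le> length Q"
  then have first: "g [w 0] ! 0 = Q' ! length Q" if "w \<in> infwords d" for w
    using fun_cong[OF bspec[OF eq that], of "length Q"]
    by (simp add: prepend_def aut_inf_def stake_def)
  have "(\<lambda>_. 1) \<in> infwords d" "(\<lambda>_. 2) \<in> infwords d" using d by (auto simp: infwords_def)
  from this[THEN first] have "g [1] ! 0 = g [2] ! 0" by simp
  moreover obtain y1 y2 where "g [1] = [y1]" "g [2] = [y2]"
    using tree_aut_singleton[OF g, of 1] tree_aut_singleton[OF g, of 2] d by auto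
  ultimately have "g [1] = g [2]" by simp
  moreover have "[1] \<in> words d" "[2] \<in> words d" using d by (auto simp: words_def)
  ultimately have "[1::nat] = [2]" using g unfolding tree_aut_def bij_betw_def inj_on_def by blast
  then show False by simp
qed

lemma tree_aut_eqI_prepend_aut_inf:
  assumes d: "2 \<le> d" and g: "tree_aut d g" and g': "tree_aut d g'"
    and eq: "\<forall>w\<in>infwords d. prepend Q (aut_inf g w) = prepend Q' (aut_inf g' w)"
  shows "g = g'"
proof (rule tree_aut_eqI_aut_inf[OF g g'])
  have "length Q = length Q'"
    using length_le_if_prepend_aut_inf_eq[OF d g eq] length_le_if_prepend_aut_inf_eq[OF d g'] eq
    by (metis le_antisym)
  show "\<forall>w\<in>infwords d. aut_inf g w = aut_inf g' w"
  proof (intro ballI ext)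
    fix w j assume "w \<in> infwords d"
    then have "prepend Q (aut_inf g w) (j + length Q) = prepend Q' (aut_inf g' w) (j + length Q)"
      using eq by simp
    then show "aut_inf g w j = aut_inf g' w j" using \<open>length Q = length Q'\<close> by (simp add: prepend_def)
  qed
qed (use d in simp)

subsection \<open>Persistent automorphisms\<close>

lemma persistent_Cons_top:
  assumes g: "tree_aut d g" and p: "state_of d g d = g" and y: "y \<in> words d" and "1 \<le> d"
  shows "g (d # y) = g [d] @ g y"
proof -
  have "[d] @ y \<in> words d" using y \<open>1 \<le> d\<close> by (auto simp: words_def)
  then obtain c where c: "g ([d] @ y) = g [d] @ c" using tree_aut_append[OF g] by blast
  obtain e where "g [d] = [e]" using tree_aut_singleton[OF g, of d] \<open>1 \<le> d\<close> by auto
  moreover have "state_of d g d y = tl (g (d # y))" using y by (simp add: state_of_def)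
  ultimately show ?thesis using p c by simp
qed

lemma persistent_replicate_append:
  assumes g: "tree_aut d g" and p: "state_of d g d = g" and y: "y \<in> words d" and d: "1 \<le> d"
  shows "g (replicate m d @ y) = g (replicate m d) @ g y"
proof (induction m)
  case 0 then show ?case using g by (simp add: tree_aut_def)
next
  case (Suc m)
  have r: "replicate m d \<in> words d" using d by (rule replicate_in_words)
  have "g (replicate (Suc m) d @ y) = g [d] @ g (replicate m d @ y)"
    using persistent_Cons_top[OF g p _ d] r y by (simp add: append_in_words_iff)
  also have "\<dots> = g (replicate (Suc m) d) @ g y"
    using Suc persistent_Cons_top[OF g p r d] by simp
  finally show ?case .
qed

lemma aut_inf_prepend_replicate:
  assumes g: "tree_aut d g" and p: "state_of d g d = g" and w: "w \<in> infwords d" and d: "1 \<le> d"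
  shows "aut_inf g (prepend (replicate m d) w) = prepend (g (replicate m d)) (aut_inf g w)"
proof
  fix j
  have r: "replicate m d \<in> words d" using d by (rule replicate_in_words)
  have len: "length (g (replicate m d)) = m" using length_tree_aut[OF g r] by simp
  have "aut_inf g (prepend (replicate m d) w) j = g (stake (m + Suc j) (prepend (replicate m d) w)) ! j"
    by (rule aut_inf_eq_nth_stake[OF g prepend_in_infwords[OF r w]]) simp
  also have "\<dots> = (g (replicate m d) @ g (stake (Suc j) w)) ! j"
    using stake_prepend[of "replicate m d" "Suc j" w]
      persistent_replicate_append[OF g p stake_in_words[OF w] d] by simp
  also have "\<dots> = prepend (g (replicate m d)) (aut_inf g w) j"
    using len aut_inf_eq_nth_stake[OF g w, of "j - m" "Suc j"]
    by (cases "j < m") (auto simp: prepend_def nth_append)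
  finally show "aut_inf g (prepend (replicate m d) w) j = prepend (g (replicate m d)) (aut_inf g w) j" .
qed

subsection \<open>Leaves of complete subtrees\<close>

lemma fcr_subtree_prefix_closed: "fcr_subtree d T \<Longrightarrow> a @ r \<in> T \<Longrightarrow> a \<in> T"
proof (induction r rule: rev_induct)
  case (snoc x r)
  then have "a @ r \<in> T" unfolding fcr_subtree_def by (metis append_assoc)
  then show ?case using snoc.IH snoc.prems(1) by blast
qed simp

lemma finite_leaves: "fcr_subtree d T \<Longrightarrow> finite (leaves T)"
  by (simp add: fcr_subtree_def leaves_def)

lemma leaves_prefix_eq:
  assumes T: "fcr_subtree d T" and "a \<in> leaves T" "a @ r \<in> leaves T"
  shows "r = []"
proof (cases r)
  case (Cons c r')
  then have "a @ [c] \<in> T"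
    using fcr_subtree_prefix_closed[OF T, of "a @ [c]" r'] assms(3) by (simp add: leaves_def)
  then show ?thesis using assms(2) by (simp add: leaves_def)
qed

lemma leaves_eq_if_stake_eq:
  assumes T: "fcr_subtree d T" and "a \<in> leaves T" "b \<in> leaves T"
    and "stake (length a) w = a" "stake (length b) w = b"
  shows "a = b"
proof -
  have shorter: "x = y"
    if "x \<in> leaves T" "y \<in> leaves T" "stake (length x) w = x" "stake (length y) w = y"
      and "length x \<le> length y" for x y
  proof -
    have "take (length x) y = x"
      using take_stake[of "length x" "length y" w] that(3-5) by (simp add: min_def)
    then have "y = x @ drop (length x) y" by (metis append_take_drop_id)
    then show ?thesis using leaves_prefix_eq[OF T that(1), of "drop (length x) y"] that(2) by simp
  qed
  show ?thesis using shorter[of a b] shorter[of b a] assms(2-5) by (cases "length a \<le> length b") auto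
qed

lemma replicate_in_leaves:
  assumes T: "fcr_subtree d T" and d: "1 \<le> d"
  shows "\<exists>k. replicate k d \<in> leaves T"
proof -
  define S where "S = {k. replicate k d \<in> T}"
  have "inj (\<lambda>k. replicate k d)" by (rule injI) (metis length_replicate)
  then have "finite S" unfolding S_def using T finite_vimageI[of T]
    by (simp add: fcr_subtree_def vimage_def)
  moreover have "0 \<in> S" using T by (simp add: S_def fcr_subtree_def)
  ultimately have max: "Max S \<in> S" "\<And>k. k \<in> S \<Longrightarrow> k \<le> Max S" using Max_in Max_ge by auto
  have "replicate (Max S) d @ [x] \<notin> T" for x
  proof
    assume "replicate (Max S) d @ [x] \<in> T"
    then have "replicate (Max S) d @ [d] \<in> T" using T d unfolding fcr_subtree_def by auto
    then have "Suc (Max S) \<in> S" by (simp add: S_def replicate_append_same)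
    then show False using max(2) by fastforce
  qed
  then show ?thesis using max(1) by (auto simp: S_def leaves_def)
qed

lemma leaves_le_replicate:
  assumes T: "fcr_subtree d T" and r: "replicate k d \<in> leaves T" and v: "v \<in> leaves T"
  shows "v \<le> replicate k d"
proof (rule ccontr)
  assume "\<not> v \<le> replicate k d"
  then have "replicate k d < v" by auto
  then have "(replicate k d, v) \<in> lexord {(u, v). u < v}" by (simp add: list_less_def)
  then consider a z where "v = replicate k d @ a # z"
    | u a b x y where "a < b" "replicate k d = u @ a # x" "v = u @ b # y"
    unfolding lexord_def by blast
  then show False
  proof cases
    case 1 then show False using leaves_prefix_eq[OF T r, of "a # z"] v by simp
  next
    case (2 u a b x y)
    then have "a = d" by (metis in_set_conv_decomp in_set_replicate)
    moreover have "b \<le> d" using 2 v T unfolding leaves_def fcr_subtree_def words_def by fastforce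
    ultimately show False using 2 by simp
  qed
qed

lemma last_leaf_list_replicate:
  assumes T: "fcr_subtree d T" and d: "1 \<le> d"
  obtains k where "leaf_list T \<noteq> []" "last (leaf_list T) = replicate k d"
proof -
  obtain k where k: "replicate k d \<in> leaves T" using replicate_in_leaves[OF T d] by blast
  define vs where "vs = leaf_list T"
  have set_vs: "set vs = leaves T" and "sorted vs"
    using finite_leaves[OF T] by (simp_all add: vs_def leaf_list_def)
  then have ne: "vs \<noteq> []" using k by auto
  obtain i where i: "i < length vs" "vs ! i = replicate k d" using k set_vs by (metis in_set_conv_nth)
  have "replicate k d \<le> last vs"
    using i ne sorted_nth_mono[OF \<open>sorted vs\<close>, of i "length vs - 1"] by (simp add: last_conv_nth)
  moreover have "last vs \<le> replicate k d"
    using leaves_le_replicate[OF T k] last_in_set[OF ne] set_vs by blast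
  ultimately show thesis using that ne by (simp add: vs_def)
qed

subsection \<open>The map represented by a triple\<close>

lemma length_leaf_list_valid_triple:
  "valid_triple d G Tm \<sigma> gs Tp \<Longrightarrow> length (leaf_list Tp) = length gs"
  using finite_leaves[of d Tp] by (simp add: valid_triple_def leaf_list_def)

lemma triple_map_prepend_leaf:
  assumes Tp: "fcr_subtree d Tp" and i: "i < length (leaf_list Tp)"
  shows "triple_map Tm \<sigma> gs Tp (prepend (leaf_list Tp ! i) z)
    = prepend (leaf_list Tm ! \<sigma> i) (aut_inf (gs ! i) z)"
proof -
  define vs where "vs = leaf_list Tp"
  define W where "W = prepend (vs ! i) z"
  have set_vs: "set vs = leaves Tp" and "distinct vs"
    using finite_leaves[OF Tp] by (simp_all add: vs_def leaf_list_def)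
  let ?P = "\<lambda>j. j < length vs \<and> stake (length (vs ! j)) W = vs ! j"
  have Pi: "?P i" using i by (simp add: vs_def W_def stake_length_prepend)
  have "j = i" if "?P j" for j
  proof -
    have "vs ! j = vs ! i"
      using leaves_eq_if_stake_eq[OF Tp, of "vs ! j" "vs ! i" W] that Pi set_vs by (metis nth_mem)
    then show ?thesis using nth_eq_iff_index_eq[OF \<open>distinct vs\<close>] that Pi by blast
  qed
  then have "(SOME j. ?P j) = i" using Pi by (rule some_equality[rotated])
  moreover have "(\<lambda>k. W (k + length (vs ! i))) = z" by (simp add: W_def prepend_def)
  ultimately show ?thesis using Pi
    unfolding triple_map_def Let_def vs_def[symmetric] W_def[symmetric]
    by (auto simp: prepend_def)
qed

lemma triple_map_prepend_replicate:
  assumes d: "1 \<le> d" and G: "aut_subgroup d G" and P: "persistent d G"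
    and V: "valid_triple d G Tm \<sigma> gs Tp"
    and ne: "leaf_list Tp \<noteq> []" and k: "last (leaf_list Tp) = replicate k d"
    and w: "w \<in> infwords d"
  shows "triple_map Tm \<sigma> gs Tp (prepend (replicate (k + m) d) w)
    = prepend (leaf_list Tm ! \<sigma> (length gs - 1) @ last gs (replicate m d)) (aut_inf (last gs) w)"
proof -
  define n where "n = length gs - 1"
  have len: "length (leaf_list Tp) = length gs" using V by (rule length_leaf_list_valid_triple)
  with ne have gs: "gs \<noteq> []" by auto
  then have n: "n < length (leaf_list Tp)" and last: "last gs = gs ! n"
    using len by (auto simp: n_def last_conv_nth)
  have "last gs \<in> G" using V gs by (auto simp: valid_triple_def)
  then have g: "tree_aut d (last gs)" and p: "state_of d (last gs) d = last gs"
    using G P by (auto simp: aut_subgroup_def persistent_def)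
  have "leaf_list Tp ! n = replicate k d" using k ne len by (simp add: n_def last_conv_nth)
  then have "triple_map Tm \<sigma> gs Tp (prepend (replicate (k + m) d) w)
      = triple_map Tm \<sigma> gs Tp (prepend (leaf_list Tp ! n) (prepend (replicate m d) w))"
    by (simp add: prepend_prepend replicate_add)
  also have "\<dots> = prepend (leaf_list Tm ! \<sigma> n) (aut_inf (last gs) (prepend (replicate m d) w))"
    using triple_map_prepend_leaf[of d Tp n] V n last by (simp add: valid_triple_def)
  also have "\<dots> = prepend (leaf_list Tm ! \<sigma> n @ last gs (replicate m d)) (aut_inf (last gs) w)"
    by (simp add: aut_inf_prepend_replicate[OF g p w d] prepend_prepend)
  finally show ?thesis by (simp add: n_def)
qed

theorem lemma5p4:
  fixes d :: nat and G :: "(nat list \<Rightarrow> nat list) set"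
    and Tm Tp Tm' Tp' :: "nat list set" and \<sigma> \<sigma>' :: "nat \<Rightarrow> nat"
    and gs gs' :: "(nat list \<Rightarrow> nat list) list"
  assumes "d \<ge> 2"
    and "aut_subgroup d G" and "self_similar d G" and "persistent d G"
    and "valid_triple d G Tm \<sigma> gs Tp" and "valid_triple d G Tm' \<sigma>' gs' Tp'"
    and "\<forall>w\<in>infwords d. triple_map Tm \<sigma> gs Tp w = triple_map Tm' \<sigma>' gs' Tp' w"
  shows "last gs = last gs'"
proof -
  have d: "1 \<le> d" using assms(1) by simp
  obtain k where k: "leaf_list Tp \<noteq> []" "last (leaf_list Tp) = replicate k d"
    using last_leaf_list_replicate[of d Tp] assms(5) d by (auto simp: valid_triple_def)
  obtain k' where k': "leaf_list Tp' \<noteq> []" "last (leaf_list Tp') = replicate k' d"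
    using last_leaf_list_replicate[of d Tp'] assms(6) d by (auto simp: valid_triple_def)
  have "gs \<noteq> []" "gs' \<noteq> []"
    using k(1) k'(1) assms(5,6)[THEN length_leaf_list_valid_triple] by auto
  then have "last gs \<in> G" "last gs' \<in> G" using assms(5,6) by (auto simp: valid_triple_def)
  then have g: "tree_aut d (last gs)" "tree_aut d (last gs')"
    using assms(2) by (auto simp: aut_subgroup_def)
  have "\<forall>w\<in>infwords d.
      prepend (leaf_list Tm ! \<sigma> (length gs - 1) @ last gs (replicate k' d)) (aut_inf (last gs) w)
    = prepend (leaf_list Tm' ! \<sigma>' (length gs' - 1) @ last gs' (replicate k d)) (aut_inf (last gs') w)"
    (is "\<forall>w\<in>_. ?same w")
  proof
    fix w assume w: "w \<in> infwords d"
    have "prepend (replicate (k + k') d) w \<in> infwords d"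
      using prepend_in_infwords[OF replicate_in_words[OF d] w] .
    then show "?same w"
      using assms(7) triple_map_prepend_replicate[OF d assms(2,4,5) k w, of k']
        triple_map_prepend_replicate[OF d assms(2,4,6) k' w, of k]
      by (simp add: add.commute)
  qed
  then show ?thesis using tree_aut_eqI_prepend_aut_inf[OF assms(1) g] by blast
qed

end
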